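(* Let $S$ be a subsemigroup of $(M_n(\mathbb{C}),+)$ such that every pair $(A,B) \in S^2$ has property L. Then the linear subspace $\mathrm{Span}(S)$ of $M_n(\mathbb{C})$ has property L.
   Context: A pair $(A,B) \in M_n(\mathbb{C})^2$ has property L if there exist $n$ linear forms $f_1,\dots,f_n$ on $\mathbb{C}^2$ such that for all $(x,y) \in \mathbb{C}^2$, the characteristic polynomial of $xA+yB$ equals $\prod_{k=1}^n (X - f_k(x,y))$. A linear subspace $V$ of $M_n(\mathbb{C})$ has property L if there exist $n$ linear forms $f_1,\dots,f_n$ on $V$ such that for every $M \in V$, the characteristic polynomial of $M$ equals $\prod_{k=1}^n (X - f_k(M))$. *)

theory Defs
  imports "Jordan_Normal_Form.Char_Poly"
begin

text \<open>Property L for a pair (A,B) of n x n complex matrices: there are n linear forms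
  f_k(x,y) = a_k x + b_k y on C^2 (every C-linear form on C^2 has this shape) such that
  the characteristic polynomial of xA+yB is the product of (X - f_k(x,y)).\<close>
definition pair_property_L :: "nat \<Rightarrow> complex mat \<Rightarrow> complex mat \<Rightarrow> bool" where
  "pair_property_L n A B \<longleftrightarrow>
     (\<exists>a b :: nat \<Rightarrow> complex. \<forall>x y :: complex.
        char_poly (x \<cdot>\<^sub>m A + y \<cdot>\<^sub>m B) = (\<Prod>k<n. [:- (a k * x + b k * y), 1:]))"

inductive_set mat_span :: "nat \<Rightarrow> complex mat set \<Rightarrow> complex mat set" for n S where
  zero: "0\<^sub>m n n \<in> mat_span n S"
| base: "A \<in> S \<Longrightarrow> A \<in> mat_span n S"
| add: "A \<in> mat_span n S \<Longrightarrow> B \<in> mat_span n S \<Longrightarrow> A + B \<in> mat_span n S"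
| smult: "A \<in> mat_span n S \<Longrightarrow> c \<cdot>\<^sub>m A \<in> mat_span n S"

definition linear_form_on :: "complex mat set \<Rightarrow> (complex mat \<Rightarrow> complex) \<Rightarrow> bool" where
  "linear_form_on V f \<longleftrightarrow>
     (\<forall>A\<in>V. \<forall>B\<in>V. f (A + B) = f A + f B) \<and> (\<forall>A\<in>V. \<forall>c. f (c \<cdot>\<^sub>m A) = c * f A)"

definition subspace_property_L :: "nat \<Rightarrow> complex mat set \<Rightarrow> bool" where
  "subspace_property_L n V \<longleftrightarrow>
     (\<exists>f :: nat \<Rightarrow> complex mat \<Rightarrow> complex. (\<forall>k<n. linear_form_on V (f k)) \<and>
        (\<forall>M\<in>V. char_poly M = (\<Prod>k<n. [:- f k M, 1:])))"

end

theory Submission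
  imports Defs "HOL-Library.Function_Algebras"
begin

text \<open>
  The heart of the proof is that property L propagates from pairs to finite lists:
  for every list A_1, ..., A_m of elements of S, the characteristic polynomial of
  x_1 A_1 + ... + x_m A_m is a product of linear factors X - f_k(x) (list property L).  For B, D in S and a tail As, the matrices
  D + c B (c >= 1) lie in S, so every list (D + c B) # As has property L.  The tail
  parts of its forms are forms of As, hence up to reindexing independent of c (a linear
  form agreeing pointwise with one of finitely many forms is one of them); its head
  coefficients are eigenvalues a_j c + b_j of c B + D.  By pigeonhole one choice of
  indices works for infinitely many c, which factors char_poly (s B + r D + W) on
  infinitely many lines s = c r; since both sides are polynomial in s and in r
  separately, the factorisation holds for all (s, r).

  Finally Span(S) is finite-dimensional, hence the set of combinations of a finite list
  of elements of S, and the forms of that list descend to well-defined linear forms on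
  Span(S) because the characteristic polynomial of the zero matrix is X^n.
\<close>

section \<open>Linear combinations of lists of matrices\<close>

primrec lincomb :: "nat \<Rightarrow> complex mat list \<Rightarrow> (nat \<Rightarrow> complex) \<Rightarrow> complex mat" where
  "lincomb n [] x = 0\<^sub>m n n"
| "lincomb n (A # As) x = x 0 \<cdot>\<^sub>m A + lincomb n As (\<lambda>i. x (Suc i))"

definition lform :: "(nat \<Rightarrow> complex) \<Rightarrow> nat \<Rightarrow> (nat \<Rightarrow> complex) \<Rightarrow> complex" where
  "lform c m x = (\<Sum>i<m. c i * x i)"

lemma dim_lincomb [simp]: "dim_row (lincomb n As x) = n" "dim_col (lincomb n As x) = n"
  by (induction As arbitrary: x) auto

lemma lincomb_carrier: "lincomb n As x \<in> carrier_mat n n"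
  by (rule carrier_matI) simp_all

lemma lincomb_add:
  "set As \<subseteq> carrier_mat n n \<Longrightarrow> lincomb n As (\<lambda>i. x i + y i) = lincomb n As x + lincomb n As y"
proof (induction As arbitrary: x y)
  case (Cons A As)
  then show ?case
    by (auto intro!: eq_matI simp: algebra_simps)
qed simp

lemma lincomb_smult:
  "set As \<subseteq> carrier_mat n n \<Longrightarrow> lincomb n As (\<lambda>i. c * x i) = c \<cdot>\<^sub>m lincomb n As x"
proof (induction As arbitrary: x)
  case (Cons A As)
  then show ?case
    by (auto intro!: eq_matI simp: algebra_simps)
qed simp

lemma lincomb_diff:
  "set As \<subseteq> carrier_mat n n \<Longrightarrow> lincomb n As (\<lambda>i. x i - y i) = lincomb n As x - lincomb n As y"
proof (induction As arbitrary: x y)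
  case (Cons A As)
  then show ?case
    by (auto intro!: eq_matI simp: algebra_simps)
qed (auto intro!: eq_matI)

lemma lincomb_zero: "set As \<subseteq> carrier_mat n n \<Longrightarrow> lincomb n As (\<lambda>_. 0) = 0\<^sub>m n n"
  by (induction As) auto

lemma lform_Suc: "lform c (Suc m) x = c 0 * x 0 + lform (\<lambda>i. c (Suc i)) m (\<lambda>i. x (Suc i))"
  unfolding lform_def by (rule sum.lessThan_Suc_shift)

lemma lform_add: "lform c m (\<lambda>i. x i + y i) = lform c m x + lform c m y"
  unfolding lform_def by (simp add: algebra_simps sum.distrib)

lemma lform_smult: "lform c m (\<lambda>i. a * x i) = a * lform c m x"
  unfolding lform_def by (simp add: algebra_simps sum_distrib_left)

lemma lform_diff: "lform c m (\<lambda>i. x i - y i) = lform c m x - lform c m y"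
  unfolding lform_def by (simp add: algebra_simps sum_subtractf)

definition list_property_L :: "nat \<Rightarrow> complex mat list \<Rightarrow> bool" where
  "list_property_L n As \<longleftrightarrow>
     (\<exists>c. \<forall>x. char_poly (lincomb n As x) = (\<Prod>k<n. [:- lform (c k) (length As) x, 1:]))"

lemma root_of_linear_product:
  fixes a :: "nat \<Rightarrow> 'a :: idom"
  assumes "poly (\<Prod>k<n. [:- a k, 1:]) z = 0"
  shows "\<exists>k<n. z = a k"
  using assms by (auto simp: poly_prod)

lemma linear_factors_match:
  fixes a b :: "nat \<Rightarrow> 'a :: idom"
  assumes "(\<Prod>k<n. [:- a k, 1:]) = (\<Prod>k<n. [:- b k, 1:])" and "k < n"
  shows "\<exists>j<n. a k = b j"
proof -
  have "poly (\<Prod>k<n. [:- a k, 1:]) (a k) = 0"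
    using \<open>k < n\<close> by (auto simp: poly_prod)
  then show ?thesis
    using root_of_linear_product[of b n "a k"] assms(1) by simp
qed

text \<open>The characteristic polynomial of the zero matrix is X^n; together with the
  previous lemma this forces all forms to vanish at the zero matrix.\<close>
lemma char_poly_zero_mat: "char_poly (0\<^sub>m n n :: complex mat) = (\<Prod>k<n. [:- 0, 1:])"
proof -
  have "char_poly (0\<^sub>m n n :: complex mat) =
        prod_list (map ((\<lambda>a::complex. [:- a, 1:]) \<circ> (\<lambda>i. 0\<^sub>m n n $$ (i, i))) [0..<n])"
    using char_poly_upper_triangular[of "0\<^sub>m n n" n] by (simp add: diag_mat_def)
  also have "map ((\<lambda>a::complex. [:- a, 1:]) \<circ> (\<lambda>i. 0\<^sub>m n n $$ (i, i))) [0..<n] = replicate n [:0, 1:]"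
    by (simp add: list_eq_iff_nth_eq)
  finally show ?thesis by (simp add: prod_list_replicate)
qed

section \<open>Polynomial identities\<close>

lemma poly_eq_0_if_infinite_roots:
  fixes p :: "'a :: idom poly"
  assumes "infinite A" and "\<And>t. t \<in> A \<Longrightarrow> poly p t = 0"
  shows "poly p t = 0"
proof -
  have "A \<subseteq> {x. poly p x = 0}" using assms(2) by auto
  then have "p = 0"
    using assms(1) poly_roots_finite finite_subset by blast
  then show ?thesis by simp
qed

lemma vanishes_from_lines:
  fixes F :: "complex \<Rightarrow> complex \<Rightarrow> complex" and C :: "complex set"
  assumes poly_s: "\<And>r. \<exists>p. \<forall>s. F s r = poly p s"
    and poly_r: "\<And>s. \<exists>p. \<forall>r. F s r = poly p r"
    and C: "infinite C" and lines: "\<And>c r. c \<in> C \<Longrightarrow> F (c * r) r = 0"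
  shows "F s r = 0"
proof -
  have off_axis: "F s r = 0" if "r \<noteq> 0" for s r
  proof -
    obtain p where p: "\<forall>s. F s r = poly p s" using poly_s by blast
    have "infinite ((\<lambda>c. c * r) ` C)"
      using C \<open>r \<noteq> 0\<close> finite_imageD by (auto simp: inj_on_def)
    then have "poly p s = 0"
      by (rule poly_eq_0_if_infinite_roots) (use p[rule_format, symmetric] lines in auto)
    then show ?thesis using p by simp
  qed
  obtain p where p: "\<forall>r. F s r = poly p r" using poly_r by blast
  have "infinite (UNIV - {0 :: complex})" by (simp add: infinite_UNIV_char_0)
  then have "poly p r = 0"
    by (rule poly_eq_0_if_infinite_roots) (use p[rule_format, symmetric] off_axis in auto)
  then show ?thesis using p by simp
qed

lemma char_poly_pencil_polynomial:
  fixes M N :: "complex mat"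
  assumes M: "M \<in> carrier_mat n n" and N: "N \<in> carrier_mat n n"
  shows "\<exists>p. \<forall>t. poly (char_poly (M + t \<cdot>\<^sub>m N)) z = poly p t"
proof -
  define P where "P = mat n n (\<lambda>(i,j). [: (if i = j then z else 0) - M $$ (i,j), - N $$ (i,j) :])"
  have "poly (char_poly (M + t \<cdot>\<^sub>m N)) z = poly (det P) t" for t
  proof -
    have "poly (char_poly (M + t \<cdot>\<^sub>m N)) z = det (- (char_matrix (M + t \<cdot>\<^sub>m N) z))"
      using M N by (intro char_poly_matrix) auto
    also have "\<dots> = poly (det P) t"
      by (rule poly_det_cong[of _ n, symmetric]) (use M N in \<open>auto simp: P_def char_matrix_def\<close>)
    finally show ?thesis .
  qed
  then show ?thesis by blast
qed

lemma linear_product_polynomial: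
  fixes z :: "'a :: comm_ring_1"
  shows "\<exists>p. \<forall>t. poly (\<Prod>k<n. [:- (u k * t + v k), 1:]) z = poly p t"
proof -
  have "poly (\<Prod>k<n. [:- (u k * t + v k), 1:]) z = poly (\<Prod>k<n. [: z - v k, - u k:]) t" for t
    by (simp add: poly_prod algebra_simps)
  then show ?thesis by blast
qed

lemma char_poly_factorisation_from_lines:
  fixes B D W :: "complex mat" and C :: "complex set"
  assumes B: "B \<in> carrier_mat n n" and D: "D \<in> carrier_mat n n" and W: "W \<in> carrier_mat n n"
    and C: "infinite C"
    and lines: "\<And>c r. c \<in> C \<Longrightarrow> char_poly ((c * r) \<cdot>\<^sub>m B + (r \<cdot>\<^sub>m D + W)) =
                   (\<Prod>k<n. [:- (\<alpha> k * (c * r) + \<beta> k * r + \<gamma> k), 1:])"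
  shows "char_poly (s \<cdot>\<^sub>m B + (r \<cdot>\<^sub>m D + W)) = (\<Prod>k<n. [:- (\<alpha> k * s + \<beta> k * r + \<gamma> k), 1:])"
proof -
  have "poly (char_poly (s \<cdot>\<^sub>m B + (r \<cdot>\<^sub>m D + W))) z =
        poly (\<Prod>k<n. [:- (\<alpha> k * s + \<beta> k * r + \<gamma> k), 1:]) z" for z
  proof -
    define F where "F s r = poly (char_poly (s \<cdot>\<^sub>m B + (r \<cdot>\<^sub>m D + W))) z -
                            poly (\<Prod>k<n. [:- (\<alpha> k * s + \<beta> k * r + \<gamma> k), 1:]) z" for s r
    have poly_s: "\<exists>p. \<forall>s. F s r = poly p s" for r
    proof -
      obtain p where p: "\<forall>s. poly (char_poly ((r \<cdot>\<^sub>m D + W) + s \<cdot>\<^sub>m B)) z = poly p s"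
        using char_poly_pencil_polynomial[of "r \<cdot>\<^sub>m D + W" n B] B D W by auto
      obtain q where q: "\<forall>s. poly (\<Prod>k<n. [:- (\<alpha> k * s + (\<beta> k * r + \<gamma> k)), 1:]) z = poly q s"
        using linear_product_polynomial[where u=\<alpha> and v="\<lambda>k. \<beta> k * r + \<gamma> k"] by blast
      have "s \<cdot>\<^sub>m B + (r \<cdot>\<^sub>m D + W) = (r \<cdot>\<^sub>m D + W) + s \<cdot>\<^sub>m B" for s
        using B D W by (auto intro!: eq_matI)
      then have "F s r = poly (p - q) s" for s
        using p q by (simp add: F_def add.assoc)
      then show ?thesis by blast
    qed
    have poly_r: "\<exists>p. \<forall>r. F s r = poly p r" for s
    proof -
      obtain p where p: "\<forall>r. poly (char_poly ((s \<cdot>\<^sub>m B + W) + r \<cdot>\<^sub>m D)) z = poly p r"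
        using char_poly_pencil_polynomial[of "s \<cdot>\<^sub>m B + W" n D] B D W by auto
      obtain q where q: "\<forall>r. poly (\<Prod>k<n. [:- (\<beta> k * r + (\<alpha> k * s + \<gamma> k)), 1:]) z = poly q r"
        using linear_product_polynomial[where u=\<beta> and v="\<lambda>k. \<alpha> k * s + \<gamma> k"] by blast
      have "s \<cdot>\<^sub>m B + (r \<cdot>\<^sub>m D + W) = (s \<cdot>\<^sub>m B + W) + r \<cdot>\<^sub>m D" for r
        using B D W by (auto intro!: eq_matI)
      then have "F s r = poly (p - q) r" for r
        using p q by (simp add: F_def ac_simps)
      then show ?thesis by blast
    qed
    have "F s r = 0"
      by (rule vanishes_from_lines[OF poly_s poly_r C]) (simp add: F_def lines)
    then show ?thesis by (simp add: F_def)
  qed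
  then show ?thesis by (simp flip: poly_eq_poly_eq_iff add: fun_eq_iff)
qed

section \<open>Separation of linear forms and pigeonhole\<close>

text \<open>Separation: if a linear form agrees at every point with one of finitely many linear
  forms, it is one of them (C^m is not a finite union of proper subspaces).  Test along
  the moment curve w = (1, t, t^2, ...): each disagreement is a nonzero polynomial in t.\<close>
lemma lform_among_finitely_many:
  fixes v :: "nat \<Rightarrow> complex" and l :: "nat \<Rightarrow> nat \<Rightarrow> complex"
  assumes pointwise: "\<And>w. \<exists>j<n. lform v m w = lform (l j) m w"
  shows "\<exists>j<n. \<forall>i<m. v i = l j i"
proof (rule ccontr)
  assume "\<not> ?thesis"
  then have differs: "\<forall>j<n. \<exists>i<m. v i \<noteq> l j i" by auto
  define p where "p j = (\<Sum>i<m. monom (v i - l j i) i)" for j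
  have eval: "poly (p j) t = lform v m (\<lambda>i. t ^ i) - lform (l j) m (\<lambda>i. t ^ i)" for j t
    unfolding p_def lform_def by (simp add: poly_sum poly_monom algebra_simps sum_subtractf)
  have "p j \<noteq> 0" if "j < n" for j
  proof -
    obtain i where i: "i < m" "v i \<noteq> l j i" using differs \<open>j < n\<close> by blast
    have "coeff (p j) i = v i - l j i"
      using i(1) by (simp add: p_def coeff_sum coeff_monom)
    then show ?thesis using i(2) by auto
  qed
  then have "finite (\<Union>j<n. {t. poly (p j) t = 0})"
    using poly_roots_finite by auto
  then obtain t :: complex where t: "t \<notin> (\<Union>j<n. {t. poly (p j) t = 0})"
    using infinite_UNIV_char_0 by (metis UNIV_I ex_new_if_finite)
  obtain j where "j < n" "lform v m (\<lambda>i. t ^ i) = lform (l j) m (\<lambda>i. t ^ i)"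
    using pointwise by blast
  then show False using t eval by auto
qed

lemma forms_determined:
  fixes u v :: "nat \<Rightarrow> nat \<Rightarrow> complex"
  assumes same: "\<And>w. (\<Prod>k<n. [:- lform (u k) m w, 1:]) = (\<Prod>k<n. [:- lform (v k) m w, 1:])"
    and "k < n"
  shows "\<exists>j<n. \<forall>i<m. u k i = v j i"
proof (rule lform_among_finitely_many)
  fix w
  show "\<exists>j<n. lform (u k) m w = lform (v j) m w"
    using linear_factors_match[OF same \<open>k < n\<close>] .
qed

lemma infinite_uniform_choice:
  fixes C :: "'a set" and P :: "'a \<Rightarrow> nat \<Rightarrow> nat \<Rightarrow> bool"
  assumes C: "infinite C" and ex: "\<And>c k. c \<in> C \<Longrightarrow> k < n \<Longrightarrow> \<exists>j<N. P c k j"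
  obtains \<sigma> C' where "C' \<subseteq> C" "infinite C'" "\<And>c k. c \<in> C' \<Longrightarrow> k < n \<Longrightarrow> P c k (\<sigma> k)"
proof -
  obtain choice where choice: "\<And>c k. c \<in> C \<Longrightarrow> k < n \<Longrightarrow> choice c k < N \<and> P c k (choice c k)"
    using ex by metis
  define pattern where "pattern c = restrict (choice c) {..<n}" for c
  have "pattern c \<in> (\<Pi>\<^sub>E k\<in>{..<n}. {..<N})" if "c \<in> C" for c
    unfolding pattern_def restrict_PiE_iff using choice that by auto
  then have "pattern ` C \<subseteq> (\<Pi>\<^sub>E k\<in>{..<n}. {..<N})" by auto
  then have "finite (pattern ` C)"
    by (rule finite_subset) (auto intro: finite_PiE)
  from pigeonhole_infinite[OF C this]
  obtain c0 where "c0 \<in> C" and inf: "infinite {c \<in> C. pattern c = pattern c0}" by blast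
  have "P c k (choice c0 k)" if "c \<in> C" "pattern c = pattern c0" "k < n" for c k
  proof -
    have "choice c k = choice c0 k"
      using fun_cong[OF that(2), of k] that(3) by (simp add: pattern_def)
    then show ?thesis using choice that(1,3) by metis
  qed
  then show ?thesis
    using that[of "{c \<in> C. pattern c = pattern c0}" "choice c0"] inf by blast
qed

section \<open>From pairs to lists: factorisation on infinitely many lines\<close>

lemma factorisation_Cons:
  assumes "\<And>x. char_poly (lincomb n (A # As) x) = (\<Prod>k<n. [:- lform (f k) (Suc m) x, 1:])"
  shows "char_poly (r \<cdot>\<^sub>m A + lincomb n As w) =
           (\<Prod>k<n. [:- (f k 0 * r + lform (\<lambda>i. f k (Suc i)) m w), 1:])"
  using assms[of "case_nat r w"] by (simp add: lform_Suc)

text \<open>Let (B, D) have property L with forms a_k x + b_k y, and let f c be forms for the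
  lists (D + c B) # As, c \<ge> 1.  The tail parts of f c are forms of As, so up to reindexing
  they are those of f 1; the head coefficients are eigenvalues a_j c + b_j of D + c B.
  By pigeonhole both reindexings can be taken independent of c on an infinite set.\<close>
lemma uniform_pencil_forms:
  fixes B D :: "complex mat" and a b :: "nat \<Rightarrow> complex" and f :: "nat \<Rightarrow> nat \<Rightarrow> nat \<Rightarrow> complex"
  assumes B: "B \<in> carrier_mat n n" and D: "D \<in> carrier_mat n n" and As: "set As \<subseteq> carrier_mat n n"
    and pair: "\<forall>x y. char_poly (x \<cdot>\<^sub>m B + y \<cdot>\<^sub>m D) = (\<Prod>k<n. [:- (a k * x + b k * y), 1:])"
    and f: "\<And>c r w. 1 \<le> c \<Longrightarrow> char_poly (r \<cdot>\<^sub>m (D + of_nat c \<cdot>\<^sub>m B) + lincomb n As w) =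
               (\<Prod>k<n. [:- (f c k 0 * r + lform (\<lambda>i. f c k (Suc i)) m w), 1:])"
  obtains C \<sigma> \<tau> where "C \<subseteq> {1..}" "infinite C"
    "\<And>c k. c \<in> C \<Longrightarrow> k < n \<Longrightarrow> f c k 0 = a (\<tau> k) * of_nat c + b (\<tau> k)"
    "\<And>c k. c \<in> C \<Longrightarrow> k < n \<Longrightarrow> \<forall>i<m. f c k (Suc i) = f 1 (\<sigma> k) (Suc i)"
proof -
  have tail_factors: "char_poly (lincomb n As w) = (\<Prod>k<n. [:- lform (\<lambda>i. f c k (Suc i)) m w, 1:])"
    if "1 \<le> c" for c w
  proof -
    have "0 \<cdot>\<^sub>m (D + of_nat c \<cdot>\<^sub>m B) + lincomb n As w = lincomb n As w"
      using B D by (auto intro!: eq_matI)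
    then show ?thesis using f[OF that, of 0 w] by simp
  qed
  have tail: "\<exists>j<n. \<forall>i<m. f c k (Suc i) = f 1 j (Suc i)" if "1 \<le> c" "k < n" for c k
  proof (rule forms_determined[OF _ \<open>k < n\<close>])
    show "(\<Prod>k<n. [:- lform (\<lambda>i. f c k (Suc i)) m w, 1:]) =
          (\<Prod>k<n. [:- lform (\<lambda>i. f 1 k (Suc i)) m w, 1:])" for w
      using tail_factors[OF \<open>1 \<le> c\<close>, of w] tail_factors[of 1 w] by simp
  qed
  have head: "\<exists>j<n. f c k 0 = a j * of_nat c + b j" if "1 \<le> c" "k < n" for c k
  proof -
    have "1 \<cdot>\<^sub>m (D + of_nat c \<cdot>\<^sub>m B) + lincomb n As (\<lambda>_. 0) = of_nat c \<cdot>\<^sub>m B + 1 \<cdot>\<^sub>m D"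
      using lincomb_zero[OF As] B D by (auto intro!: eq_matI)
    then have "(\<Prod>k<n. [:- f c k 0, 1:]) = (\<Prod>k<n. [:- (a k * of_nat c + b k), 1:])"
      using f[OF \<open>1 \<le> c\<close>, of 1 "\<lambda>_. 0"] pair by (simp add: lform_def)
    from linear_factors_match[OF this \<open>k < n\<close>] show ?thesis .
  qed
  obtain \<sigma> C1 where C1: "C1 \<subseteq> {1..}" "infinite C1"
    and tail_\<sigma>: "\<And>c k. c \<in> C1 \<Longrightarrow> k < n \<Longrightarrow> \<forall>i<m. f c k (Suc i) = f 1 (\<sigma> k) (Suc i)"
    by (rule infinite_uniform_choice[of "{1::nat..}" n n "\<lambda>c k j. \<forall>i<m. f c k (Suc i) = f 1 j (Suc i)"])
      (use tail infinite_Ici[of "1::nat"] in auto)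
  obtain \<tau> C2 where C2: "C2 \<subseteq> C1" "infinite C2"
    and head_\<tau>: "\<And>c k. c \<in> C2 \<Longrightarrow> k < n \<Longrightarrow> f c k 0 = a (\<tau> k) * of_nat c + b (\<tau> k)"
    by (rule infinite_uniform_choice[of C1 n n "\<lambda>c k j. f c k 0 = a j * of_nat c + b j"])
      (use head C1 in auto)
  show ?thesis
  proof (rule that[of C2 \<tau> \<sigma>])
    show "C2 \<subseteq> {1..}" using C1(1) C2(1) by auto
    show "\<forall>i<m. f c k (Suc i) = f 1 (\<sigma> k) (Suc i)" if "c \<in> C2" "k < n" for c k
      using tail_\<sigma> C2(1) that by auto
  qed (use C2(2) head_\<tau> in auto)
qed

lemma factorisation_on_lines:
  fixes B D :: "complex mat" and a b :: "nat \<Rightarrow> complex"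
  assumes B: "B \<in> carrier_mat n n" and D: "D \<in> carrier_mat n n" and As: "set As \<subseteq> carrier_mat n n"
    and pair: "\<forall>x y. char_poly (x \<cdot>\<^sub>m B + y \<cdot>\<^sub>m D) = (\<Prod>k<n. [:- (a k * x + b k * y), 1:])"
    and L: "\<And>c. 1 \<le> c \<Longrightarrow> list_property_L n ((D + of_nat c \<cdot>\<^sub>m B) # As)"
  obtains C :: "complex set" and \<alpha> \<beta> :: "nat \<Rightarrow> complex" and \<gamma> :: "nat \<Rightarrow> nat \<Rightarrow> complex"
  where "infinite C"
    "\<And>c r w. c \<in> C \<Longrightarrow> char_poly ((c * r) \<cdot>\<^sub>m B + (r \<cdot>\<^sub>m D + lincomb n As w)) =
       (\<Prod>k<n. [:- (\<alpha> k * (c * r) + \<beta> k * r + lform (\<gamma> k) (length As) w), 1:])"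
proof -
  define m where "m = length As"
  have "\<forall>c. \<exists>f. 1 \<le> c \<longrightarrow> (\<forall>x. char_poly (lincomb n ((D + of_nat c \<cdot>\<^sub>m B) # As) x) =
                                   (\<Prod>k<n. [:- lform (f k) (Suc m) x, 1:]))"
    using L unfolding list_property_L_def m_def by fastforce
  then obtain f where fx: "\<And>c x. 1 \<le> c \<Longrightarrow> char_poly (lincomb n ((D + of_nat c \<cdot>\<^sub>m B) # As) x) =
                                     (\<Prod>k<n. [:- lform (f c k) (Suc m) x, 1:])"
    by metis
  have f: "char_poly (r \<cdot>\<^sub>m (D + of_nat c \<cdot>\<^sub>m B) + lincomb n As w) =
      (\<Prod>k<n. [:- (f c k 0 * r + lform (\<lambda>i. f c k (Suc i)) m w), 1:])" if "1 \<le> c" for c r w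
    using factorisation_Cons[OF fx[OF that]] .
  obtain C \<tau> \<sigma> where C: "C \<subseteq> {1..}" "infinite C"
    and head: "\<And>c k. c \<in> C \<Longrightarrow> k < n \<Longrightarrow> f c k 0 = a (\<tau> k) * of_nat c + b (\<tau> k)"
    and tail: "\<And>c k. c \<in> C \<Longrightarrow> k < n \<Longrightarrow> \<forall>i<m. f c k (Suc i) = f 1 (\<sigma> k) (Suc i)"
    by (rule uniform_pencil_forms[OF B D As pair f]) auto
  have lines: "char_poly ((c' * r) \<cdot>\<^sub>m B + (r \<cdot>\<^sub>m D + lincomb n As w)) =
      (\<Prod>k<n. [:- (a (\<tau> k) * (c' * r) + b (\<tau> k) * r + lform (\<lambda>i. f 1 (\<sigma> k) (Suc i)) m w), 1:])"
    if c': "c' \<in> of_nat ` C" for c' r w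
  proof -
    obtain c where c: "c \<in> C" "c' = of_nat c" using c' by blast
    then have "1 \<le> c" using C by auto
    have "r \<cdot>\<^sub>m (D + of_nat c \<cdot>\<^sub>m B) + lincomb n As w = (c' * r) \<cdot>\<^sub>m B + (r \<cdot>\<^sub>m D + lincomb n As w)"
      using B D c by (auto intro!: eq_matI simp: algebra_simps)
    moreover have "lform (\<lambda>i. f c k (Suc i)) m w = lform (\<lambda>i. f 1 (\<sigma> k) (Suc i)) m w" if "k < n" for k
      using tail[OF c(1) that] unfolding lform_def by (auto intro!: sum.cong)
    ultimately show ?thesis
      using f[OF \<open>1 \<le> c\<close>, of r w] head c by (simp add: algebra_simps)
  qed
  have "inj_on (of_nat :: nat \<Rightarrow> complex) C" by (simp add: inj_on_def)
  then have "infinite (of_nat ` C :: complex set)"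
    using C(2) finite_imageD by blast
  then show ?thesis
    by (rule that) (use lines in \<open>simp add: m_def\<close>)
qed

section \<open>Property L for lists of elements of S\<close>

context
  fixes n :: nat and S :: "complex mat set"
  assumes S_carrier: "S \<subseteq> carrier_mat n n"
    and S_add: "\<forall>A\<in>S. \<forall>B\<in>S. A + B \<in> S"
    and S_pairs: "\<forall>A\<in>S. \<forall>B\<in>S. pair_property_L n A B"
begin

lemma S_multiple_add:
  assumes "A \<in> S" and "B \<in> S" and "1 \<le> c"
  shows "A + of_nat c \<cdot>\<^sub>m B \<in> S"
  using \<open>1 \<le> c\<close>
proof (induction c rule: nat_induct_at_least)
  case base
  have "A + of_nat 1 \<cdot>\<^sub>m B = A + B" using assms S_carrier by auto
  then show ?case using assms S_add by simp
next
  case (Suc c)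
  have "A + of_nat (Suc c) \<cdot>\<^sub>m B = (A + of_nat c \<cdot>\<^sub>m B) + B"
    using assms S_carrier by (auto intro!: eq_matI simp: algebra_simps)
  then show ?case using assms S_add Suc by auto
qed

text \<open>Lists of length one: property L of the pair (A, A), restricted to y = 0.\<close>
lemma list_property_L_single: "A \<in> S \<Longrightarrow> list_property_L n [A]"
proof -
  assume A: "A \<in> S"
  then obtain a b where ab: "\<forall>x y. char_poly (x \<cdot>\<^sub>m A + y \<cdot>\<^sub>m A) = (\<Prod>k<n. [:- (a k * x + b k * y), 1:])"
    using S_pairs unfolding pair_property_L_def by blast
  have "lincomb n [A] x = x 0 \<cdot>\<^sub>m A + 0 \<cdot>\<^sub>m A" for x
    using A S_carrier by (auto intro!: eq_matI)
  then have "char_poly (lincomb n [A] x) = (\<Prod>k<n. [:- lform (\<lambda>_. a k) 1 x, 1:])" for x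
    using ab by (simp add: lform_def)
  then show ?thesis unfolding list_property_L_def by auto
qed

lemma list_property_L_step:
  assumes IH: "\<forall>A\<in>S. list_property_L n (A # As)"
    and As: "set As \<subseteq> S" and B: "B \<in> S" and D: "D \<in> S"
  shows "list_property_L n (B # D # As)"
proof -
  have Bc: "B \<in> carrier_mat n n" and Dc: "D \<in> carrier_mat n n" and Asc: "set As \<subseteq> carrier_mat n n"
    using B D As S_carrier by auto
  obtain a b where pair: "\<forall>x y. char_poly (x \<cdot>\<^sub>m B + y \<cdot>\<^sub>m D) = (\<Prod>k<n. [:- (a k * x + b k * y), 1:])"
    using S_pairs B D unfolding pair_property_L_def by blast
  have L: "list_property_L n ((D + of_nat c \<cdot>\<^sub>m B) # As)" if "1 \<le> c" for c
    using IH S_multiple_add[OF D B that] by blast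
  obtain C \<alpha> \<beta> \<gamma> where C: "infinite C"
    and lines: "\<And>c r w. c \<in> C \<Longrightarrow> char_poly ((c * r) \<cdot>\<^sub>m B + (r \<cdot>\<^sub>m D + lincomb n As w)) =
                 (\<Prod>k<n. [:- (\<alpha> k * (c * r) + \<beta> k * r + lform (\<gamma> k) (length As) w), 1:])"
    using factorisation_on_lines[OF Bc Dc Asc pair L] by blast
  text \<open>The k-th form of B # D # As has coefficients \<alpha>_k, \<beta>_k, \<gamma>_k.\<close>
  define forms where "forms k = case_nat (\<alpha> k) (case_nat (\<beta> k) (\<gamma> k))" for k
  from char_poly_factorisation_from_lines[OF Bc Dc lincomb_carrier C lines]
  have "char_poly (lincomb n (B # D # As) x) = (\<Prod>k<n. [:- lform (forms k) (length (B # D # As)) x, 1:])"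
    for x by (simp add: forms_def lform_Suc algebra_simps)
  then show ?thesis unfolding list_property_L_def by blast
qed

lemma list_property_L_of_S: "set As \<subseteq> S \<Longrightarrow> list_property_L n As"
proof -
  have Cons: "set Bs \<subseteq> S \<Longrightarrow> \<forall>A\<in>S. list_property_L n (A # Bs)" for Bs
  proof (induction Bs)
    case Nil then show ?case using list_property_L_single by auto
  next
    case (Cons D Bs) then show ?case using list_property_L_step[of Bs _ D] by auto
  qed
  have "list_property_L n []"
    unfolding list_property_L_def by (auto simp: lform_def char_poly_zero_mat)
  then show "set As \<subseteq> S \<Longrightarrow> list_property_L n As" using Cons by (cases As) auto
qed

end

section \<open>Span(S) is spanned by a finite list of elements of S\<close>

text \<open>To use the dimension theory of the library, n x n matrices are embedded, via their
  entries, into the complex vector space of functions nat \<Rightarrow> nat \<Rightarrow> complex; the image lies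
  in the span of the n^2 matrix units, so every independent set of entry vectors is finite.\<close>

definition scale2 :: "complex \<Rightarrow> (nat \<Rightarrow> nat \<Rightarrow> complex) \<Rightarrow> (nat \<Rightarrow> nat \<Rightarrow> complex)" where
  "scale2 c f = (\<lambda>i j. c * f i j)"

interpretation V: vector_space scale2
  by unfold_locales (auto simp: scale2_def fun_eq_iff algebra_simps)

definition entries :: "nat \<Rightarrow> complex mat \<Rightarrow> (nat \<Rightarrow> nat \<Rightarrow> complex)" where
  "entries n M = (\<lambda>i j. if i < n \<and> j < n then M $$ (i,j) else 0)"

definition unit_entry :: "nat \<Rightarrow> nat \<Rightarrow> (nat \<Rightarrow> nat \<Rightarrow> complex)" where
  "unit_entry p q = (\<lambda>i j. if i = p \<and> j = q then 1 else 0)"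

lemma entries_add: "A \<in> carrier_mat n n \<Longrightarrow> B \<in> carrier_mat n n \<Longrightarrow> entries n (A + B) = entries n A + entries n B"
  by (auto simp: entries_def fun_eq_iff)

lemma entries_smult: "A \<in> carrier_mat n n \<Longrightarrow> entries n (c \<cdot>\<^sub>m A) = scale2 c (entries n A)"
  by (auto simp: entries_def fun_eq_iff scale2_def)

lemma entries_zero: "entries n (0\<^sub>m n n) = 0"
  by (auto simp: entries_def fun_eq_iff)

lemma entries_inj: "A \<in> carrier_mat n n \<Longrightarrow> B \<in> carrier_mat n n \<Longrightarrow> entries n A = entries n B \<Longrightarrow> A = B"
  by (rule eq_matI) (auto simp: entries_def fun_eq_iff, metis)

lemma sum_apply2: "(\<Sum>x\<in>X. f x) i j = (\<Sum>x\<in>X. f x i j)"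
  by (induction X rule: infinite_finite_induct) auto

lemma entries_in_unit_span:
  assumes "A \<in> carrier_mat n n"
  shows "entries n A \<in> V.span ((\<lambda>(p,q). unit_entry p q) ` ({..<n} \<times> {..<n}))"
proof -
  have "entries n A = (\<Sum>p<n. \<Sum>q<n. scale2 (A $$ (p,q)) (unit_entry p q))"
  proof (intro ext)
    fix i j
    have "(\<Sum>p<n. \<Sum>q<n. scale2 (A $$ (p,q)) (unit_entry p q)) i j =
          (\<Sum>p<n. \<Sum>q<n. if p = i \<and> q = j then A $$ (p,q) else 0)"
      by (simp add: sum_apply2 scale2_def unit_entry_def) (auto intro!: sum.cong)
    also have "\<dots> = (\<Sum>p<n. if p = i then (if i < n \<and> j < n then A $$ (i,j) else 0) else 0)"
      by (rule sum.cong) (auto simp: sum.delta' if_distrib)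
    also have "\<dots> = entries n A i j"
      by (simp add: sum.delta' entries_def)
    finally show "entries n A i j = (\<Sum>p<n. \<Sum>q<n. scale2 (A $$ (p,q)) (unit_entry p q)) i j" by simp
  qed
  also have "\<dots> \<in> V.span ((\<lambda>(p,q). unit_entry p q) ` ({..<n} \<times> {..<n}))"
    by (intro V.span_sum V.span_scale V.span_base) auto
  finally show ?thesis .
qed

lemma mat_span_carrier:
  assumes "S \<subseteq> carrier_mat n n"
  shows "M \<in> mat_span n S \<Longrightarrow> M \<in> carrier_mat n n"
  by (induction M rule: mat_span.induct) (use assms in auto)

lemma entries_mat_span:
  assumes S: "S \<subseteq> carrier_mat n n"
  shows "M \<in> mat_span n S \<Longrightarrow> entries n M \<in> V.span (entries n ` S)"
proof (induction M rule: mat_span.induct)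
  case zero then show ?case by (simp only: entries_zero V.span_zero)
next
  case (base A) then show ?case by (simp add: V.span_base)
next
  case (add A B)
  then have "entries n (A + B) = entries n A + entries n B"
    using mat_span_carrier[OF S] by (intro entries_add) auto
  then show ?case using add.IH V.span_add by (simp only:)
next
  case (smult A c)
  then have "entries n (c \<cdot>\<^sub>m A) = scale2 c (entries n A)"
    using mat_span_carrier[OF S] by (intro entries_smult) auto
  then show ?case using smult.IH V.span_scale by (simp only:)
qed

lemma lincomb_unit:
  "set As \<subseteq> carrier_mat n n \<Longrightarrow> i < length As \<Longrightarrow> lincomb n As (\<lambda>j. if j = i then 1 else 0) = As ! i"
proof (induction As arbitrary: i)
  case (Cons A As)
  show ?case
  proof (cases i)
    case 0
    then show ?thesis using Cons.prems lincomb_zero[of As n] by (auto intro!: eq_matI)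
  next
    case (Suc i')
    then have "As ! i' \<in> carrier_mat n n" using Cons.prems by auto
    then show ?thesis using Cons Suc by (auto intro!: eq_matI)
  qed
qed simp

lemma span_entries_list:
  assumes As: "set As \<subseteq> carrier_mat n n"
  shows "V.span (entries n ` set As) \<subseteq> range (\<lambda>x. entries n (lincomb n As x))"
proof (rule V.span_minimal)
  show "entries n ` set As \<subseteq> range (\<lambda>x. entries n (lincomb n As x))"
  proof
    fix v assume "v \<in> entries n ` set As"
    then obtain i where i: "i < length As" "v = entries n (As ! i)"
      by (auto simp: in_set_conv_nth)
    then show "v \<in> range (\<lambda>x. entries n (lincomb n As x))"
      using lincomb_unit[OF As i(1)] by (metis rangeI)
  qed
  show "V.subspace (range (\<lambda>x. entries n (lincomb n As x)))"
  proof (rule V.subspaceI)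
    show "0 \<in> range (\<lambda>x. entries n (lincomb n As x))"
      using lincomb_zero[OF As] entries_zero by (metis rangeI)
  next
    fix u v assume "u \<in> range (\<lambda>x. entries n (lincomb n As x))" "v \<in> range (\<lambda>x. entries n (lincomb n As x))"
    then obtain x y where "u = entries n (lincomb n As x)" "v = entries n (lincomb n As y)" by blast
    then have "u + v = entries n (lincomb n As (\<lambda>i. x i + y i))"
      by (simp add: lincomb_add[OF As] entries_add lincomb_carrier)
    then show "u + v \<in> range (\<lambda>x. entries n (lincomb n As x))" by blast
  next
    fix c u assume "u \<in> range (\<lambda>x. entries n (lincomb n As x))"
    then obtain x where "u = entries n (lincomb n As x)" by blast
    then have "scale2 c u = entries n (lincomb n As (\<lambda>i. c * x i))"
      by (simp add: lincomb_smult[OF As] entries_smult lincomb_carrier)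
    then show "scale2 c u \<in> range (\<lambda>x. entries n (lincomb n As x))" by blast
  qed
qed

text \<open>A maximal independent subset of the entry vectors of S is finite and spans them;
  listing the corresponding matrices gives a finite list spanning Span(S).\<close>
lemma finite_spanning_list:
  assumes S: "S \<subseteq> carrier_mat n n"
  obtains As where "set As \<subseteq> S" "\<And>M. M \<in> mat_span n S \<Longrightarrow> \<exists>x. lincomb n As x = M"
proof -
  obtain Bs where Bs: "Bs \<subseteq> entries n ` S" "V.independent Bs" "entries n ` S \<subseteq> V.span Bs"
    using V.maximal_independent_subset by blast
  have units: "finite ((\<lambda>(p,q). unit_entry p q) ` ({..<n} \<times> {..<n}))" by auto
  have "Bs \<subseteq> V.span ((\<lambda>(p,q). unit_entry p q) ` ({..<n} \<times> {..<n}))"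
    using Bs(1) S entries_in_unit_span by blast
  then have "finite Bs"
    using V.independent_span_bound[OF units Bs(2)] by blast
  then obtain Sf where Sf: "Sf \<subseteq> S" "finite Sf" "Bs = entries n ` Sf"
    using Bs(1) by (metis finite_subset_image)
  obtain As where As: "set As = Sf" using finite_list[OF Sf(2)] by blast
  have Asc: "set As \<subseteq> carrier_mat n n" using As Sf S by auto
  have "\<exists>x. lincomb n As x = M" if M: "M \<in> mat_span n S" for M
  proof -
    have "entries n M \<in> V.span (entries n ` S)" by (rule entries_mat_span[OF S M])
    also have "\<dots> \<subseteq> V.span Bs" using Bs(3) V.span_mono V.span_span by metis
    also have "\<dots> \<subseteq> range (\<lambda>x. entries n (lincomb n As x))"
      using span_entries_list[OF Asc] As Sf(3) by simp
    finally obtain x where "entries n M = entries n (lincomb n As x)" by blast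
    then show ?thesis
      using entries_inj[OF mat_span_carrier[OF S M] lincomb_carrier] by metis
  qed
  then show ?thesis using that As Sf(1) by blast
qed

section \<open>From a list with property L to its span\<close>

text \<open>The forms of a list are constant on the fibres of x \<mapsto> lincomb x: the difference of
  two coefficient vectors with the same combination has characteristic polynomial X^n.\<close>
lemma lform_respects_lincomb:
  assumes As: "set As \<subseteq> carrier_mat n n"
    and c: "\<And>x. char_poly (lincomb n As x) = (\<Prod>k<n. [:- lform (c k) (length As) x, 1:])"
    and eq: "lincomb n As x = lincomb n As y" and k: "k < n"
  shows "lform (c k) (length As) x = lform (c k) (length As) y"
proof -
  have "lincomb n As (\<lambda>i. x i - y i) = 0\<^sub>m n n"
    using lincomb_diff[OF As] eq lincomb_carrier by simp
  then have "(\<Prod>k<n. [:- lform (c k) (length As) (\<lambda>i. x i - y i), 1:]) = (\<Prod>k<n. [:- 0, 1:])"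
    using c[of "\<lambda>i. x i - y i"] char_poly_zero_mat by simp
  from linear_factors_match[OF this k] show ?thesis by (simp add: lform_diff)
qed

lemma subspace_property_L_from_list:
  assumes As: "set As \<subseteq> carrier_mat n n" and L: "list_property_L n As"
    and V_add: "\<And>A B. A \<in> V \<Longrightarrow> B \<in> V \<Longrightarrow> A + B \<in> V"
    and V_smult: "\<And>A a. A \<in> V \<Longrightarrow> a \<cdot>\<^sub>m A \<in> V"
    and V_comb: "\<And>M. M \<in> V \<Longrightarrow> \<exists>x. lincomb n As x = M"
  shows "subspace_property_L n V"
proof -
  obtain c where c: "\<And>x. char_poly (lincomb n As x) = (\<Prod>k<n. [:- lform (c k) (length As) x, 1:])"
    using L unfolding list_property_L_def by blast
  define coords where "coords M = (SOME x. lincomb n As x = M)" for M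
  have coords: "lincomb n As (coords M) = M" if "M \<in> V" for M
    unfolding coords_def using V_comb[OF that] by (rule someI_ex)
  define f where "f k M = lform (c k) (length As) (coords M)" for k M
  have respects: "f k M = lform (c k) (length As) x" if "M \<in> V" "lincomb n As x = M" "k < n" for k M x
    using lform_respects_lincomb[OF As c _ that(3)] coords[OF that(1)] that(2) by (simp add: f_def)
  have "linear_form_on V (f k)" if "k < n" for k
    unfolding linear_form_on_def
  proof (intro conjI ballI allI)
    fix A B assume "A \<in> V" "B \<in> V"
    then show "f k (A + B) = f k A + f k B"
      using respects[of "A + B" "\<lambda>i. coords A i + coords B i" k] V_add coords \<open>k < n\<close>
      by (simp add: lincomb_add[OF As] lform_add f_def)
  next
    fix A a assume "A \<in> V"
    then show "f k (a \<cdot>\<^sub>m A) = a * f k A"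
      using respects[of "a \<cdot>\<^sub>m A" "\<lambda>i. a * coords A i" k] V_smult coords \<open>k < n\<close>
      by (simp add: lincomb_smult[OF As] lform_smult f_def)
  qed
  moreover have "char_poly M = (\<Prod>k<n. [:- f k M, 1:])" if "M \<in> V" for M
    using c[of "coords M"] coords[OF that] by (simp add: f_def)
  ultimately show ?thesis unfolding subspace_property_L_def by blast
qed

theorem mainTheorem12:
  fixes n :: nat and S :: "complex mat set"
  assumes "S \<subseteq> carrier_mat n n"
    and "\<forall>A\<in>S. \<forall>B\<in>S. A + B \<in> S"
    and "\<forall>A\<in>S. \<forall>B\<in>S. pair_property_L n A B"
  shows "subspace_property_L n (mat_span n S)"
proof -
  obtain As where As: "set As \<subseteq> S" and spans: "\<And>M. M \<in> mat_span n S \<Longrightarrow> \<exists>x. lincomb n As x = M"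
    using finite_spanning_list[OF assms(1)] by blast
  have As_carrier: "set As \<subseteq> carrier_mat n n" using As assms(1) by auto
  have "list_property_L n As" using list_property_L_of_S[OF assms As] .
  from subspace_property_L_from_list[OF As_carrier this mat_span.add mat_span.smult spans]
  show ?thesis .
qed

end
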